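(* Let $p\ge1$, $f\in\mathcal A_0$, and let $\gamma_f$ be a solution of Problem $S_p$ for $f$. Then $\overline\delta J_p(f,\gamma_f)=1$.
   Context: For a convex $u$, $u^*(y)=\sup_x\{\langle x,y\rangle-u(x)\}$. $\mathcal L$: proper convex $u:\mathbb R^n\to\mathbb R\cup\{+\infty\}$ with $u(x)\to+\infty$ as $|x|\to\infty$; $\mathcal L_0=\{u\in\mathcal L:u\ge0,\ u^{**}=u,\ u(0)=0\}$; $\mathcal A_0=\{e^{-u}:u\in\mathcal L_0\}$ (integrable, support with nonempty interior). For $f=e^{-u}$: $h_f=u^*$; $J(f)=\int f\,dx$; $J(f^\diamond)=\int(nf+f\log f)\,dx$; $\mu_p(f,\cdot)$ defined by $\int g\,d\mu_p(f,\cdot)=\int_{\mathrm{dom}(u)}g(\nabla u(x))h_f(\nabla u(x))^{1-p}f(x)\,dx$; $\delta J_p(f,g)=\frac1p\int h_g^p\,d\mu_p(f,\cdot)$ and $\overline\delta J_p(f,g)=(p\,\delta J_p(f,g)/J(f^\diamond))^{1/p}$. Gaussians: $\gamma_\phi(x)=e^{-\|\phi x\|^2/2}$, $\phi\in GL(n)$; $c_n=(2\pi)^{n/2}$. Problem $S_p$: find a Gaussian $\gamma_\phi$ maximizing $J(\gamma_\phi)/c_n$ subject to $\overline\delta J_p(f,\gamma_\phi)\le1$. *)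

theory Defs
  imports "HOL-Analysis.Analysis"
begin

definition ext_convex :: "('a::real_vector \<Rightarrow> ereal) \<Rightarrow> bool" where
  "ext_convex u \<longleftrightarrow> (\<forall>x y (t::real). 0 < t \<and> t < 1 \<longrightarrow>
      u ((1 - t) *\<^sub>R x + t *\<^sub>R y) \<le> ereal (1 - t) * u x + ereal t * u y)"

definition ext_proper :: "('a \<Rightarrow> ereal) \<Rightarrow> bool" where
  "ext_proper u \<longleftrightarrow> (\<forall>x. u x \<noteq> -\<infinity>) \<and> (\<exists>x. u x \<noteq> \<infinity>)"

definition legendre :: "('a::real_inner \<Rightarrow> ereal) \<Rightarrow> 'a \<Rightarrow> ereal" where
  "legendre u y = (SUP x. ereal (x \<bullet> y) - u x)"

definition class_L :: "('a::real_normed_vector \<Rightarrow> ereal) \<Rightarrow> bool" where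
  "class_L u \<longleftrightarrow> ext_proper u \<and> ext_convex u \<and> (u \<longlongrightarrow> \<infinity>) at_infinity"

definition class_L0 :: "('a::real_inner \<Rightarrow> ereal) \<Rightarrow> bool" where
  "class_L0 u \<longleftrightarrow> class_L u \<and> (\<forall>x. u x \<ge> 0) \<and> legendre (legendre u) = u \<and> u 0 = 0"

definition expneg :: "('a \<Rightarrow> ereal) \<Rightarrow> 'a \<Rightarrow> real" where
  "expneg u x = (if u x = \<infinity> then 0 else exp (- real_of_ereal (u x)))"

definition class_A0 :: "(real^'n::finite \<Rightarrow> real) set" where
  "class_A0 = {expneg u | u. class_L0 u \<and> integrable lborel (expneg u)
       \<and> interior (closure {x. expneg u x > 0}) \<noteq> {}}"

definition uof :: "('a \<Rightarrow> real) \<Rightarrow> 'a \<Rightarrow> ereal" where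
  "uof f x = (if f x > 0 then ereal (- ln (f x)) else \<infinity>)"

definition hfun :: "('a::real_inner \<Rightarrow> real) \<Rightarrow> 'a \<Rightarrow> ereal" where
  "hfun f = legendre (uof f)"

text \<open>Gradient of u = -log f (meaningful a.e. on dom u).\<close>
definition gradu :: "('a::real_inner \<Rightarrow> real) \<Rightarrow> 'a \<Rightarrow> 'a" where
  "gradu f x = (SOME v. ((\<lambda>y. - ln (f y)) has_derivative (\<lambda>h. v \<bullet> h)) (at x))"

definition epow :: "ereal \<Rightarrow> real \<Rightarrow> ennreal" where
  "epow h q = (if q = 0 then 1
     else if h = \<infinity> then (if q > 0 then \<infinity> else 0)
     else if h > 0 then ennreal (real_of_ereal h powr q)
     else (if q > 0 then 0 else \<infinity>))"

text \<open>delta J_p(f,g) = (1/p) \<integral> h_g^p d mu_p(f,.), where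
  \<integral> G d mu_p(f,.) = \<integral>_{dom u} G(\<nabla>u(x)) h_f(\<nabla>u(x))^{1-p} f(x) dx.\<close>
definition deltaJ :: "real \<Rightarrow> (real^'n::finite \<Rightarrow> real) \<Rightarrow> (real^'n \<Rightarrow> real) \<Rightarrow> ennreal" where
  "deltaJ p f g = ennreal (1 / p) *
     (\<integral>\<^sup>+ x \<in> {x. uof f x \<noteq> \<infinity>}.
        epow (hfun g (gradu f x)) p * epow (hfun f (gradu f x)) (1 - p) * ennreal (f x) \<partial>lebesgue)"

definition Jint :: "(real^'n::finite \<Rightarrow> real) \<Rightarrow> real" where
  "Jint f = (\<integral> x. f x \<partial>lborel)"

text \<open>J(f^\<diamond>) = \<integral> (n f + f log f) dx.\<close>
definition Jdiam :: "(real^'n::finite \<Rightarrow> real) \<Rightarrow> real" where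
  "Jdiam f = (\<integral> x. real CARD('n) * f x + f x * ln (f x) \<partial>lborel)"

definition deltaJbar :: "real \<Rightarrow> (real^'n::finite \<Rightarrow> real) \<Rightarrow> (real^'n \<Rightarrow> real) \<Rightarrow> ereal" where
  "deltaJbar p f g = (if deltaJ p f g = \<infinity> then \<infinity>
     else ereal ((p * enn2real (deltaJ p f g) / Jdiam f) powr (1 / p)))"

definition gauss :: "real^'n^'n \<Rightarrow> real^'n \<Rightarrow> real" where
  "gauss \<phi> x = exp (- (norm (\<phi> *v x))\<^sup>2 / 2)"

definition c_const :: "nat \<Rightarrow> real" where
  "c_const n = (2 * pi) powr (real n / 2)"

definition solves_Sp :: "real \<Rightarrow> (real^'n \<Rightarrow> real) \<Rightarrow> (real^'n \<Rightarrow> real) \<Rightarrow> bool" where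
  "solves_Sp p f \<gamma> \<longleftrightarrow>
     (\<exists>\<phi>::real^'n^'n. invertible \<phi> \<and> \<gamma> = gauss \<phi>) \<and>
     deltaJbar p f \<gamma> \<le> 1 \<and>
     (\<forall>\<psi>::real^'n^'n. invertible \<psi> \<and> deltaJbar p f (gauss \<psi>) \<le> 1 \<longrightarrow>
        Jint (gauss \<psi>) / c_const CARD('n) \<le> Jint \<gamma> / c_const CARD('n))"

end

theory Submission
  imports Defs "HOL-Probability.Distributions"
begin

(* If the maximiser \<gamma>_\<phi> had normalised first variation r < 1, then t\<phi> with r \<le> t^2 < 1 would
   do better. The Legendre transform gives h_{\<gamma>_{t\<phi>}} = h_{\<gamma>_\<phi>} / t^2 and \<delta>J_p(f,g) is
   homogeneous of degree p in h_g, so \<gamma>_{t\<phi>} has normalised variation r / t^2 \<le> 1, while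
   J(\<gamma>_{t\<phi>}) = J(\<gamma>_\<phi>) / t^n > J(\<gamma>_\<phi>).
   Taking the p-th root of the normalised quotient respects this scaling because J(f^\<diamond>) \<ge> 0,
   i.e. -\<integral> f log f \<le> n \<integral> f: differentiate \<integral> f(l x) dx = l^-n \<integral> f at l = 1 and compare with
   f(l x) \<le> f(x)^l, which holds because u = -log f is convex with u(0) = 0. *)

lemma nn_integral_cmult_le:
  fixes c :: ennreal
  shows "c * integral\<^sup>N M f \<le> (\<integral>\<^sup>+ x. c * f x \<partial>M)"
proof -
  have "c * integral\<^sup>N M f = (SUP g\<in>{g. simple_function M g \<and> g \<le> f}. c * integral\<^sup>S M g)"
    unfolding nn_integral_def by (rule SUP_mult_left_ennreal)
  also have "\<dots> \<le> (\<integral>\<^sup>+ x. c * f x \<partial>M)"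
  proof (rule SUP_least)
    fix g assume g: "g \<in> {g. simple_function M g \<and> g \<le> f}"
    then have "c * integral\<^sup>S M g = integral\<^sup>S M (\<lambda>x. c * g x)"
      by simp
    also have "\<dots> \<le> (\<integral>\<^sup>+ x. c * f x \<partial>M)"
      unfolding nn_integral_def
      by (rule SUP_upper) (use g in \<open>auto simp: le_fun_def intro!: mult_left_mono\<close>)
    finally show "c * integral\<^sup>S M g \<le> (\<integral>\<^sup>+ x. c * f x \<partial>M)" .
  qed
  finally show ?thesis .
qed

(* Unlike nn_integral_cmult, no measurability is assumed: the integrand of deltaJ involves the
   choice function gradu. *)
lemma nn_integral_cmult_finite:
  fixes c :: ennreal
  assumes "c < top"
  shows "(\<integral>\<^sup>+ x. c * f x \<partial>M) = c * integral\<^sup>N M f"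
proof (cases "c = 0")
  case False
  have inv: "c * inverse c = 1"
    using ennreal_divide_self[OF False assms] by (simp add: divide_ennreal_def)
  have "(\<integral>\<^sup>+ x. c * f x \<partial>M) = c * (inverse c * (\<integral>\<^sup>+ x. c * f x \<partial>M))"
    by (simp add: mult.assoc[symmetric] inv)
  also have "\<dots> \<le> c * (\<integral>\<^sup>+ x. inverse c * (c * f x) \<partial>M)"
    by (intro mult_left_mono nn_integral_cmult_le) simp
  also have "\<dots> = c * integral\<^sup>N M f"
    by (simp add: mult.assoc[symmetric] mult.commute[of "inverse c"] inv)
  finally show ?thesis
    using nn_integral_cmult_le antisym by blast
qed simp

lemma lborel_integral_scaleR:
  fixes f :: "'a::euclidean_space \<Rightarrow> real"
  assumes [measurable]: "f \<in> borel_measurable borel" and c: "c \<noteq> 0"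
  shows "(\<integral>x. f x \<partial>lborel) = \<bar>c\<bar> ^ DIM('a) * (\<integral>x. f (c *\<^sub>R x) \<partial>lborel)"
proof -
  have "(\<integral>x. f x \<partial>lborel) = (\<integral>x. f x \<partial>density (distr lborel borel (\<lambda>x. 0 + c *\<^sub>R x)) (\<lambda>_. \<bar>c\<bar> ^ DIM('a)))"
    using lborel_affine[OF c, of "0::'a"] by simp
  also have "\<dots> = \<bar>c\<bar> ^ DIM('a) * (\<integral>x. f (c *\<^sub>R x) \<partial>lborel)"
    by (subst integral_density) (simp_all add: integral_distr)
  finally show ?thesis .
qed

lemma SUP_scaleR_argument:
  fixes g :: "'a::real_vector \<Rightarrow> 'b::complete_lattice"
  assumes "c \<noteq> 0"
  shows "(SUP x. g (c *\<^sub>R x)) = (SUP x. g x)"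
proof -
  have "range (\<lambda>x::'a. c *\<^sub>R x) = UNIV"
    using assms by (metis surj_def scaleR_scaleR right_inverse scaleR_one)
  then show ?thesis by (metis image_image)
qed

lemma legendre_cmult_quadratic:
  fixes q :: "'a::real_inner \<Rightarrow> real"
  assumes hom: "\<And>s x. q (s *\<^sub>R x) = s\<^sup>2 * q x" and c: "c > 0"
  shows "legendre (\<lambda>x. ereal (c * q x)) y = ereal (1 / c) * legendre (\<lambda>x. ereal (q x)) y"
proof -
  define g where "g z = z \<bullet> y - q z" for z
  have "x \<bullet> y - c * q x = (1 / c) * g (c *\<^sub>R x)" for x
    using c by (simp add: g_def hom field_simps power2_eq_square)
  then have "legendre (\<lambda>x. ereal (c * q x)) y = (SUP x. ereal (1 / c) * ereal (g (c *\<^sub>R x)))"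
    by (simp add: legendre_def)
  also have "\<dots> = ereal (1 / c) * (SUP x. ereal (g (c *\<^sub>R x)))"
    using c by (simp add: Sup_ereal_mult_left')
  also have "(SUP x. ereal (g (c *\<^sub>R x))) = (SUP z. ereal (g z))"
    using c by (intro SUP_scaleR_argument) simp
  finally show ?thesis
    by (simp add: legendre_def g_def)
qed

lemma epow_ereal_mult:
  assumes c: "c > 0" and p: "p > 0"
  shows "epow (ereal c * h) p = ennreal (c powr p) * epow h p"
proof (cases h)
  case (real r)
  then show ?thesis
    using c p by (cases "r > 0") (auto simp: epow_def powr_mult ennreal_mult zero_less_mult_iff)
qed (use c p in \<open>auto simp: epow_def ennreal_mult_top\<close>)

lemma deltaJ_hfun_cmult:
  assumes h: "\<And>y. hfun g' y = ereal c * hfun g y" and c: "c > 0" and p: "p > 0"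
  shows "deltaJ p f g' = ennreal (c powr p) * deltaJ p f g"
proof -
  have "deltaJ p f g' = ennreal (1 / p) * (\<integral>\<^sup>+ x. ennreal (c powr p) *
      (epow (hfun g (gradu f x)) p * epow (hfun f (gradu f x)) (1 - p) * ennreal (f x)
        * indicator {x. uof f x \<noteq> \<infinity>} x) \<partial>lebesgue)"
    using c p by (simp add: deltaJ_def h epow_ereal_mult mult.assoc)
  also have "\<dots> = ennreal (c powr p) * deltaJ p f g"
    by (subst nn_integral_cmult_finite) (simp_all add: deltaJ_def mult.assoc mult.left_commute)
  finally show ?thesis .
qed

lemma deltaJbar_hfun_cmult:
  assumes h: "\<And>y. hfun g' y = ereal c * hfun g y" and c: "c > 0" and p: "p > 0"
    and Jdiam: "Jdiam f \<ge> 0"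
  shows "deltaJbar p f g' = ereal c * deltaJbar p f g"
proof (cases "deltaJ p f g = \<infinity>")
  case True
  then show ?thesis
    using c deltaJ_hfun_cmult[OF h c p] by (simp add: deltaJbar_def ennreal_mult_top)
next
  case False
  then obtain D where D: "deltaJ p f g = ennreal D" "D \<ge> 0"
    using that[of "enn2real (deltaJ p f g)"] by (simp add: less_top)
  have "deltaJ p f g' = ennreal (c powr p * D)"
    using deltaJ_hfun_cmult[OF h c p] D by (simp add: ennreal_mult)
  moreover have "(p * (c powr p * D) / Jdiam f) powr (1 / p) = c * (p * D / Jdiam f) powr (1 / p)"
  proof -
    have "(p * (c powr p * D) / Jdiam f) powr (1 / p) = (c powr p) powr (1 / p) * (p * D / Jdiam f) powr (1 / p)"
      using c p D(2) Jdiam by (simp add: powr_mult[symmetric] mult.left_commute)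
    then show ?thesis
      using c p by (simp add: powr_powr)
  qed
  ultimately show ?thesis
    using D by (simp add: deltaJbar_def)
qed

lemma gauss_scaleR: "gauss (t *\<^sub>R \<phi>) x = gauss \<phi> (t *\<^sub>R x)"
  by (simp add: gauss_def scaleR_matrix_vector_assoc[symmetric] matrix_vector_mult_scaleR)

lemma uof_gauss: "uof (gauss \<phi>) x = ereal ((norm (\<phi> *v x))\<^sup>2 / 2)"
  by (simp add: uof_def gauss_def)

lemma hfun_gauss_scaleR:
  assumes "t \<noteq> 0"
  shows "hfun (gauss (t *\<^sub>R \<phi>)) y = ereal (1 / t\<^sup>2) * hfun (gauss \<phi>) y"
proof -
  define q where "q x = (norm (\<phi> *v x))\<^sup>2 / 2" for x
  have hom: "q (s *\<^sub>R x) = s\<^sup>2 * q x" for s x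
    by (simp add: q_def matrix_vector_mult_scaleR power_mult_distrib)
  have "uof (gauss (t *\<^sub>R \<phi>)) = (\<lambda>x. ereal (t\<^sup>2 * q x))"
    by (simp add: fun_eq_iff uof_gauss q_def scaleR_matrix_vector_assoc[symmetric] power_mult_distrib)
  moreover have "uof (gauss \<phi>) = (\<lambda>x. ereal (q x))"
    by (simp add: fun_eq_iff uof_gauss q_def)
  ultimately show ?thesis
    unfolding hfun_def using legendre_cmult_quadratic[OF hom, of "t\<^sup>2" y] assms by simp
qed

lemma gauss_borel_measurable [measurable]: "gauss \<phi> \<in> borel_measurable borel"
proof -
  have [measurable]: "(\<lambda>x. \<phi> *v x) \<in> borel_measurable borel"
    by (intro borel_measurable_continuous_onI linear_continuous_on matrix_vector_mul_bounded_linear)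
  show ?thesis
    unfolding gauss_def by measurable
qed

lemma integrable_exp_minus_sq:
  fixes a :: real
  assumes a: "a > 0"
  shows "integrable lborel (\<lambda>x::real. exp (- a * x\<^sup>2))"
proof -
  have "exp (- a * x\<^sup>2) = sqrt (2 * pi) * std_normal_density (sqrt (2 * a) * x)" for x
    using a by (simp add: std_normal_density_def power_mult_distrib real_sqrt_mult)
  then show ?thesis
    using a integrable_std_normal_moment[of 0]
    by (simp only:) (intro integrable_mult_right lborel_integrable_real_affine[where t=0, simplified], auto)
qed

lemma integrable_exp_minus_norm_sq:
  fixes a :: real
  assumes a: "a > 0"
  shows "integrable lborel (\<lambda>x::'a::euclidean_space. exp (- a * (norm x)\<^sup>2))"
proof (rule integrableI_nonneg)
  have prod: "ennreal (exp (- a * (norm x)\<^sup>2)) = (\<Prod>b\<in>Basis. ennreal (exp (- a * (x \<bullet> b)\<^sup>2)))"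
    for x :: 'a
  proof -
    have "(norm x)\<^sup>2 = (\<Sum>b\<in>Basis. (x \<bullet> b)\<^sup>2)"
      unfolding power2_norm_eq_inner euclidean_inner[of x x] by (simp add: power2_eq_square)
    then show ?thesis
      by (simp add: sum_distrib_left exp_sum[symmetric] sum_negf prod_ennreal)
  qed
  have "(\<integral>\<^sup>+ x. ennreal (exp (- a * (norm (x::'a))\<^sup>2)) \<partial>lborel)
      = (\<Prod>b\<in>(Basis::'a set). \<integral>\<^sup>+ y. ennreal (exp (- a * y\<^sup>2)) \<partial>lborel)"
    unfolding prod by (subst nn_integral_lborel_prod) auto
  also have "\<dots> = (\<Prod>b\<in>(Basis::'a set). ennreal (\<integral> y. exp (- a * y\<^sup>2) \<partial>lborel))"
    using integrable_exp_minus_sq[OF a] by (simp add: nn_integral_eq_integral)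
  finally show "(\<integral>\<^sup>+ x. ennreal (exp (- a * (norm (x::'a))\<^sup>2)) \<partial>lborel) < \<infinity>"
    by (simp add: ennreal_power integral_nonneg_AE prod_ennreal)
qed auto

lemma integrable_gauss:
  fixes \<phi> :: "real^'n^'n"
  assumes "invertible \<phi>"
  shows "integrable lborel (gauss \<phi>)"
proof -
  obtain \<psi> where \<psi>: "\<psi> ** \<phi> = mat 1"
    using assms unfolding invertible_def by blast
  obtain K where K: "K > 0" "\<And>y. norm (\<psi> *v y) \<le> norm y * K"
    using bounded_linear.pos_bounded[OF matrix_vector_mul_bounded_linear[of \<psi>]] by blast
  have bound: "norm x \<le> K * norm (\<phi> *v x)" for x
    using K(2)[of "\<phi> *v x"] by (simp add: matrix_vector_mul_assoc \<psi> mult.commute)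
  define a where "a = 1 / (2 * K\<^sup>2)"
  have "gauss \<phi> x \<le> exp (- a * (norm x)\<^sup>2)" for x
  proof -
    have "(norm x)\<^sup>2 \<le> (K * norm (\<phi> *v x))\<^sup>2"
      using bound[of x] by (intro power_mono) auto
    then have "a * (norm x)\<^sup>2 \<le> (norm (\<phi> *v x))\<^sup>2 / 2"
      using K(1) by (simp add: a_def field_simps power_mult_distrib)
    then show ?thesis
      by (simp add: gauss_def)
  qed
  moreover have "a > 0"
    using K(1) by (simp add: a_def)
  ultimately show ?thesis
    by (intro Bochner_Integration.integrable_bound[OF integrable_exp_minus_norm_sq]) (auto simp: gauss_def)
qed

lemma Jint_gauss_pos:
  fixes \<phi> :: "real^'n^'n"
  assumes "invertible \<phi>"
  shows "Jint (gauss \<phi>) > 0"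
proof -
  have nonneg: "AE x in lborel. 0 \<le> gauss \<phi> x"
    by (simp add: gauss_def)
  have "(\<integral>x. gauss \<phi> x \<partial>lborel) \<noteq> 0"
  proof
    assume "(\<integral>x. gauss \<phi> x \<partial>lborel) = 0"
    then have "AE x in lborel. gauss \<phi> x = 0"
      using integral_nonneg_eq_0_iff_AE[OF integrable_gauss[OF assms] nonneg] by simp
    then have "AE x in (lborel :: (real^'n) measure). False"
      by (simp add: gauss_def)
    then show False
      by (simp add: ae_filter_eq_bot_iff emeasure_lborel_UNIV trivial_limit_def[symmetric])
  qed
  then show ?thesis
    using nonneg by (simp add: Jint_def integral_nonneg_AE order_less_le)
qed

lemma Jint_gauss_scaleR:
  fixes \<phi> :: "real^'n^'n"
  assumes "t \<noteq> 0"
  shows "Jint (gauss (t *\<^sub>R \<phi>)) = Jint (gauss \<phi>) / \<bar>t\<bar> ^ CARD('n)"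
  using lborel_integral_scaleR[OF gauss_borel_measurable assms, of \<phi>] assms
  by (simp add: Jint_def gauss_scaleR)

lemma ext_convex_dilation:
  fixes u :: "'a::real_vector \<Rightarrow> ereal"
  assumes convex: "ext_convex u" and u0: "u 0 = 0" and l: "l \<ge> 1"
  shows "ereal l * u x \<le> u (l *\<^sub>R x)"
proof (cases "l = 1")
  case False
  with l have "0 < 1 / l" "1 / l < 1"
    by auto
  then have "u ((1 - 1 / l) *\<^sub>R 0 + (1 / l) *\<^sub>R (l *\<^sub>R x)) \<le> ereal (1 - 1 / l) * u 0 + ereal (1 / l) * u (l *\<^sub>R x)"
    using convex unfolding ext_convex_def by blast
  then have "u x \<le> ereal (1 / l) * u (l *\<^sub>R x)"
    using l by (simp add: u0)
  then have "ereal l * u x \<le> ereal l * (ereal (1 / l) * u (l *\<^sub>R x))"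
    using l by (intro ereal_mult_left_mono) auto
  also have "\<dots> = u (l *\<^sub>R x)"
    using l by (simp add: mult.assoc[symmetric])
  finally show ?thesis .
qed simp

lemma expneg_dilation_le:
  assumes "ext_convex u" and "u 0 = 0" and l: "l \<ge> 1" and ux: "u x \<noteq> -\<infinity>"
  shows "expneg u (l *\<^sub>R x) \<le> expneg u x powr l"
proof -
  have dil: "ereal l * u x \<le> u (l *\<^sub>R x)"
    using assms(1,2) l by (rule ext_convex_dilation)
  show ?thesis
  proof (cases "u x")
    case (real s)
    show ?thesis
    proof (cases "u (l *\<^sub>R x)")
      case (real r)
      with dil \<open>u x = ereal s\<close> have "l * s \<le> r"
        by simp
      then show ?thesis
        using real \<open>u x = ereal s\<close> by (simp add: expneg_def exp_powr_real mult.commute)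
    qed (use dil \<open>u x = ereal s\<close> in \<open>auto simp: expneg_def\<close>)
  next
    case PInf
    then have "u (l *\<^sub>R x) = \<infinity>"
      using dil l by simp
    then show ?thesis
      using PInf by (simp add: expneg_def)
  qed (use ux in simp)
qed

lemma class_A0_properties:
  fixes f :: "real^'n \<Rightarrow> real"
  assumes "f \<in> class_A0"
  shows "integrable lborel f" and "\<And>x. 0 \<le> f x" and "\<And>x. f x \<le> 1"
    and "\<And>x l. 1 \<le> l \<Longrightarrow> f (l *\<^sub>R x) \<le> f x powr l"
proof -
  obtain u where f: "f = expneg u" and u: "class_L0 u" and "integrable lborel (expneg u)"
    using assms unfolding class_A0_def by blast
  then show "integrable lborel f"
    by simp
  have u_nonneg: "u x \<ge> 0" for x
    using u by (simp add: class_L0_def)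
  show "0 \<le> f x" for x
    by (simp add: f expneg_def)
  show "f x \<le> 1" for x
    using u_nonneg[of x] by (cases "u x") (auto simp: f expneg_def)
  show "f (l *\<^sub>R x) \<le> f x powr l" if "1 \<le> l" for x l
    using u u_nonneg[of x] that unfolding f
    by (intro expneg_dilation_le) (auto simp: class_L0_def class_L_def)
qed

lemma one_minus_inverse_power_le:
  fixes e :: real
  assumes "e \<ge> 0"
  shows "1 - 1 / (1 + e) ^ n \<le> n * e"
proof -
  have "1 + n * (- (e / (1 + e))) \<le> (1 + - (e / (1 + e))) ^ n"
    using assms by (intro Bernoulli_inequality) simp
  also have "1 + - (e / (1 + e)) = 1 / (1 + e)"
    using assms by (simp add: field_simps)
  finally have "1 - 1 / (1 + e) ^ n \<le> n * (e / (1 + e))"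
    by (simp add: power_one_over)
  also have "\<dots> \<le> n * e"
    using assms by (intro mult_left_mono) (simp_all add: divide_le_eq algebra_simps)
  finally show ?thesis .
qed

lemma diff_powr_one_plus_ge:
  fixes y e :: real
  assumes y: "0 \<le> y" "y \<le> 1" and e: "e \<ge> 0"
  shows "e * (y * - ln y / (1 + e * - ln y)) \<le> y - y powr (1 + e)"
proof (cases "y = 0")
  case False
  define L where "L = - ln y"
  have L: "L \<ge> 0"
    using y False by (simp add: L_def)
  have "y powr (1 + e) = y * exp (- (e * L))"
    using y False by (simp add: powr_add) (simp add: powr_def L_def mult.commute)
  also have "\<dots> = y / exp (e * L)"
    by (simp add: exp_minus divide_inverse)
  also have "\<dots> \<le> y / (1 + e * L)"
    using y e L by (intro divide_left_mono exp_ge_add_one_self mult_pos_pos add_pos_nonneg) auto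
  finally have "y - y / (1 + e * L) \<le> y - y powr (1 + e)"
    by simp
  moreover have "y - y / (1 + e * L) = e * (y * L / (1 + e * L))"
  proof -
    have "1 + e * L > 0"
      using e L by (simp add: add_pos_nonneg)
    then show ?thesis
      by (simp add: field_simps)
  qed
  ultimately show ?thesis
    by (simp add: L_def)
qed simp

lemma integral_dilation_gap:
  fixes f :: "'a::euclidean_space \<Rightarrow> real"
  assumes f_int: "integrable lborel f" and f_nonneg: "\<And>x. 0 \<le> f x"
    and decreasing: "\<And>x. f (l *\<^sub>R x) \<le> f x" and l: "l \<ge> 1"
  shows "integrable lborel (\<lambda>x. f x - f (l *\<^sub>R x))"
    and "(\<integral>x. f x - f (l *\<^sub>R x) \<partial>lborel) = (1 - 1 / l ^ DIM('a)) * (\<integral>x. f x \<partial>lborel)"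
proof -
  have [measurable]: "f \<in> borel_measurable borel"
    using borel_measurable_integrable[OF f_int] by simp
  have dilation_int: "integrable lborel (\<lambda>x. f (l *\<^sub>R x))"
    by (rule Bochner_Integration.integrable_bound[OF f_int]) (auto simp: f_nonneg decreasing)
  then show "integrable lborel (\<lambda>x. f x - f (l *\<^sub>R x))"
    using f_int by simp
  have "(\<integral>x. f (l *\<^sub>R x) \<partial>lborel) = (\<integral>x. f x \<partial>lborel) / l ^ DIM('a)"
    using lborel_integral_scaleR[of f l] l by simp
  then show "(\<integral>x. f x - f (l *\<^sub>R x) \<partial>lborel) = (1 - 1 / l ^ DIM('a)) * (\<integral>x. f x \<partial>lborel)"
    using f_int dilation_int by (simp add: left_diff_distrib)
qed

lemma truncated_entropy_integral_le:
  fixes f :: "'a::euclidean_space \<Rightarrow> real" and e :: real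
  assumes f_int: "integrable lborel f" and f_nonneg: "\<And>x. 0 \<le> f x" and f_le_1: "\<And>x. f x \<le> 1"
    and dilation: "\<And>x l. 1 \<le> l \<Longrightarrow> f (l *\<^sub>R x) \<le> f x powr l"
    and e: "e > 0"
  defines "g \<equiv> \<lambda>x. f x * - ln (f x) / (1 + e * - ln (f x))"
  shows "(\<integral>\<^sup>+x. ennreal (g x) \<partial>lborel) \<le> ennreal (DIM('a) * (\<integral>x. f x \<partial>lborel))"
proof -
  have [measurable]: "f \<in> borel_measurable borel"
    using borel_measurable_integrable[OF f_int] by simp
  define l where "l = 1 + e"
  have g_nonneg: "0 \<le> g x" for x
  proof -
    have "0 \<le> - ln (f x)"
      using f_nonneg[of x] f_le_1[of x] by (cases "f x = 0") auto
    then show ?thesis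
      unfolding g_def using e f_nonneg[of x] by (intro divide_nonneg_pos mult_nonneg_nonneg add_pos_nonneg) auto
  qed
  have defect: "e * g x \<le> f x - f (l *\<^sub>R x)" for x
  proof -
    have "e * g x \<le> f x - f x powr (1 + e)"
      unfolding g_def using f_nonneg[of x] f_le_1[of x] e by (intro diff_powr_one_plus_ge) auto
    also have "\<dots> \<le> f x - f (l *\<^sub>R x)"
      using dilation[of l x] e by (simp add: l_def)
    finally show ?thesis .
  qed
  have decreasing: "f (l *\<^sub>R x) \<le> f x" for x
    using defect[of x] mult_nonneg_nonneg[of e "g x"] g_nonneg[of x] e by linarith
  have "1 \<le> l"
    using e by (simp add: l_def)
  note gap = integral_dilation_gap[OF f_int f_nonneg decreasing this]
  have g_int: "integrable lborel g"
  proof (rule Bochner_Integration.integrable_bound[of _ "\<lambda>x. f x / e"])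
    have "g x \<le> f x / e" for x
      using defect[of x] f_nonneg[of "l *\<^sub>R x"] e by (simp add: field_simps)
    then show "AE x in lborel. norm (g x) \<le> norm (f x / e)"
      using g_nonneg f_nonneg e by (intro AE_I2) (simp add: abs_of_nonneg)
  qed (use f_int in \<open>simp_all add: g_def\<close>)
  have "e * (\<integral>x. g x \<partial>lborel) = (\<integral>x. e * g x \<partial>lborel)"
    by simp
  also have "\<dots> \<le> (\<integral>x. f x - f (l *\<^sub>R x) \<partial>lborel)"
    using g_int gap(1) defect by (intro integral_mono) auto
  also have "\<dots> = (1 - 1 / l ^ DIM('a)) * (\<integral>x. f x \<partial>lborel)"
    by (rule gap(2))
  also have "\<dots> \<le> (DIM('a) * e) * (\<integral>x. f x \<partial>lborel)"
    using e f_nonneg one_minus_inverse_power_le by (intro mult_right_mono) (auto simp: l_def)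
  finally have "(\<integral>x. g x \<partial>lborel) \<le> DIM('a) * (\<integral>x. f x \<partial>lborel)"
    using e by (simp add: mult.commute mult.left_commute)
  then show ?thesis
    using nn_integral_eq_integral[OF g_int] g_nonneg by (simp add: ennreal_leI)
qed

lemma entropy_integral_le:
  fixes f :: "'a::euclidean_space \<Rightarrow> real"
  assumes f_int: "integrable lborel f" and f_nonneg: "\<And>x. 0 \<le> f x" and f_le_1: "\<And>x. f x \<le> 1"
    and dilation: "\<And>x l. 1 \<le> l \<Longrightarrow> f (l *\<^sub>R x) \<le> f x powr l"
  shows "integrable lborel (\<lambda>x. f x * - ln (f x))"
    and "(\<integral>x. f x * - ln (f x) \<partial>lborel) \<le> DIM('a) * (\<integral>x. f x \<partial>lborel)"
proof -
  have [measurable]: "f \<in> borel_measurable borel"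
    using borel_measurable_integrable[OF f_int] by simp
  define J where "J = (\<integral>x. f x \<partial>lborel)"
  have "J \<ge> 0"
    using f_nonneg by (simp add: J_def)
  have h_nonneg: "0 \<le> f x * - ln (f x)" for x
    using f_nonneg[of x] f_le_1[of x] by (cases "f x = 0") (auto intro: mult_nonneg_nonpos)
  define g where "g k x = f x * - ln (f x) / (1 + 1 / Suc k * - ln (f x))" for k x
  have "(\<lambda>k. g k x) \<longlonglongrightarrow> f x * - ln (f x) / (1 + 0 * - ln (f x))" for x
    unfolding g_def by (intro tendsto_intros LIMSEQ_Suc[OF lim_inverse_n']) auto
  then have g_lim: "(\<lambda>k. ennreal (g k x)) \<longlonglongrightarrow> ennreal (f x * - ln (f x))" for x
    by (intro tendsto_ennrealI) simp
  have "(\<integral>\<^sup>+x. ennreal (f x * - ln (f x)) \<partial>lborel) = (\<integral>\<^sup>+x. liminf (\<lambda>k. ennreal (g k x)) \<partial>lborel)"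
    by (intro nn_integral_cong lim_imp_Liminf[symmetric] g_lim) simp
  also have "\<dots> \<le> liminf (\<lambda>k. \<integral>\<^sup>+x. ennreal (g k x) \<partial>lborel)"
    unfolding g_def by (intro nn_integral_liminf) measurable
  also have "\<dots> \<le> liminf (\<lambda>k. ennreal (DIM('a) * J))"
    unfolding g_def J_def using assms by (intro Liminf_mono always_eventually allI truncated_entropy_integral_le) auto
  finally have bound: "(\<integral>\<^sup>+x. ennreal (f x * - ln (f x)) \<partial>lborel) \<le> ennreal (DIM('a) * J)"
    by (simp add: Liminf_const)
  show h_int: "integrable lborel (\<lambda>x. f x * - ln (f x))"
    using bound h_nonneg by (intro integrableI_nonneg) (auto simp: top_unique[symmetric] intro: le_less_trans)
  have "ennreal (\<integral>x. f x * - ln (f x) \<partial>lborel) \<le> ennreal (DIM('a) * J)"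
    using bound nn_integral_eq_integral[OF h_int] h_nonneg by simp
  then show "(\<integral>x. f x * - ln (f x) \<partial>lborel) \<le> DIM('a) * J"
    using \<open>J \<ge> 0\<close> by (simp add: ennreal_le_iff)
qed

lemma Jdiam_nonneg:
  fixes f :: "real^'n \<Rightarrow> real"
  assumes "f \<in> class_A0"
  shows "Jdiam f \<ge> 0"
proof -
  note f = class_A0_properties[OF assms]
  have "Jdiam f = (\<integral>x. CARD('n) * f x - f x * - ln (f x) \<partial>lborel)"
    by (simp add: Jdiam_def)
  also have "\<dots> = CARD('n) * (\<integral>x. f x \<partial>lborel) - (\<integral>x. f x * - ln (f x) \<partial>lborel)"
    using f(1) entropy_integral_le(1)[OF f] by simp
  finally show ?thesis
    using entropy_integral_le(2)[OF f] by simp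
qed

theorem corollary3p4:
  fixes p :: real and f \<gamma> :: "real^'n \<Rightarrow> real"
  assumes "p \<ge> 1" and "f \<in> class_A0" and "solves_Sp p f \<gamma>"
  shows "deltaJbar p f \<gamma> = 1"
proof (rule ccontr)
  assume "deltaJbar p f \<gamma> \<noteq> 1"
  obtain \<phi> :: "real^'n^'n" where \<phi>: "invertible \<phi>" and \<gamma>: "\<gamma> = gauss \<phi>"
    and "deltaJbar p f \<gamma> \<le> 1"
    and maximal: "\<And>\<psi>. invertible \<psi> \<Longrightarrow> deltaJbar p f (gauss \<psi>) \<le> 1 \<Longrightarrow> Jint (gauss \<psi>) \<le> Jint \<gamma>"
    using assms(3) by (auto simp: solves_Sp_def c_const_def divide_le_cancel)
  with \<open>deltaJbar p f \<gamma> \<noteq> 1\<close> obtain r where r: "deltaJbar p f \<gamma> = ereal r" "0 \<le> r" "r < 1"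
    by (cases "deltaJ p f \<gamma> = \<infinity>") (auto simp: deltaJbar_def)
  define t where "t = sqrt ((1 + r) / 2)"
  have t: "0 < t" "t < 1" "r \<le> t\<^sup>2"
    using r by (auto simp: t_def real_sqrt_lt_1_iff)
  have "deltaJbar p f (gauss (t *\<^sub>R \<phi>)) = ereal (1 / t\<^sup>2) * deltaJbar p f \<gamma>"
    unfolding \<gamma> using t assms(1) Jdiam_nonneg[OF assms(2)]
    by (intro deltaJbar_hfun_cmult hfun_gauss_scaleR) auto
  also have "\<dots> \<le> 1"
    using r t by simp
  finally have "Jint (gauss (t *\<^sub>R \<phi>)) \<le> Jint \<gamma>"
    using t \<phi> by (intro maximal) (auto simp: scalar_invertible)
  moreover have "Jint (gauss (t *\<^sub>R \<phi>)) = Jint \<gamma> / t ^ CARD('n)"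
    using t Jint_gauss_scaleR[of t \<phi>] by (simp add: \<gamma>)
  moreover have "Jint \<gamma> > 0"
    using Jint_gauss_pos[OF \<phi>] by (simp add: \<gamma>)
  moreover have "t ^ CARD('n) < 1"
    using t by (simp add: power_less_one_iff)
  ultimately show False
    using t by (simp add: divide_le_eq)
qed

end
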